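(* Let $a,y\in\mathbb{R}$ and define $$\mathcal{K}(a;x,y,z)=2\exp(2xyz)\,\mathrm{Ai}\big(x^2+y^2+z^2+a/4\big).$$ For each $n=0,1,2,\ldots$ and $\rho\in(0,1)$ there exists a constant $C=C_n(\rho,a,y)>0$ such that $$\Big|\frac{\partial^n\mathcal{K}(a;x,y,z)}{\partial x^n}\Big|<C\exp\Big(-\frac{2\rho}{3}(x^2+z^2)^{3/2}\Big)$$ for all $x,z\in\mathbb{R}$.
   Context: $\mathrm{Ai}$ is the standard Airy function, $\mathrm{Ai}(x)=\frac{1}{2\pi i}\int_{\infty e^{-i\pi/3}}^{\infty e^{i\pi/3}}\exp(\zeta^3/3-\zeta x)\,d\zeta$, the solution of $w''=xw$ decaying as $x\to+\infty$. *)

theory Defs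
  imports "HOL-Analysis.Analysis"
begin

text \<open>Airy function via its contour integral
  Ai(x) = 1/(2 pi i) int exp(zeta^3/3 - zeta x) d zeta, taken along the contour
  from infinity e^(-i pi/3) to 0 to infinity e^(i pi/3), parametrised by
  zeta = r e^(+-i pi/3), r >= 0 (on these rays zeta^3 = -r^3).\<close>

definition Airy_integrand :: "real \<Rightarrow> real \<Rightarrow> complex" where
  "Airy_integrand x r =
     (let w = cis (pi/3); v = cis (-(pi/3)) in
        w * exp ((of_real r * w) ^ 3 / 3 - of_real r * w * of_real x)
      - v * exp ((of_real r * v) ^ 3 / 3 - of_real r * v * of_real x))"

definition Ai :: "real \<Rightarrow> real" where
  "Ai x = Re (integral {0..} (Airy_integrand x) / (2 * pi * \<i>))"

definition Kker :: "real \<Rightarrow> real \<Rightarrow> real \<Rightarrow> real \<Rightarrow> real" where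
  "Kker a x y z = 2 * exp (2 * x * y * z) * Ai (x^2 + y^2 + z^2 + a / 4)"

end

theory Submission
  imports Defs "HOL-Complex_Analysis.Complex_Analysis"
begin

text \<open>The Airy contour integral F(s) makes sense for complex s and is entire. Deforming its two
rays onto the vertical line Re \<zeta> = \<sigma> (\<sigma> \<ge> 1), where the integrand decays like exp(-u^2/2),
and letting the horizontal connecting pieces go off to infinity gives |F(s)| \<le> 2\<pi> exp(\<sigma>^3/3 - \<sigma> Re s + (Im s)^2/(2\<sigma>)). The kernel is the real part of the
entire function t \<mapsto> 2 exp(2tyz) F(t^2 + y^2 + z^2 + a/4)/(2\<pi>i) on the real axis. On the unit
circle around x, the choice \<sigma> = R + 1 with R = (x^2 + z^2)^(1/2) bounds this function by
exp(-(2/3)R^3 + O(R^2)), and the Cauchy inequality passes the bound on to every derivative in x;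
the O(R^2) is absorbed into (2(1 - \<rho>)/3) R^3.\<close>

definition airy_phase :: "complex \<Rightarrow> complex \<Rightarrow> complex" where
  "airy_phase s \<zeta> = \<zeta>^3/3 - \<zeta> * s"

definition airy_ray :: "complex \<Rightarrow> complex \<Rightarrow> real \<Rightarrow> complex" where
  "airy_ray s u r = u * exp (airy_phase s (of_real r * u))"

definition airy_ray_integrand :: "complex \<Rightarrow> real \<Rightarrow> complex" where
  "airy_ray_integrand s r = airy_ray s (cis (pi/3)) r - airy_ray s (cis (-(pi/3))) r"

definition airy_integral :: "complex \<Rightarrow> complex" where
  "airy_integral s = integral {0..} (airy_ray_integrand s)"

lemma Airy_integrand_eq: "Airy_integrand x = airy_ray_integrand (of_real x)"
  by (simp add: fun_eq_iff Airy_integrand_def airy_ray_integrand_def airy_ray_def airy_phase_def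
      Let_def)

lemma Ai_eq_airy_integral: "Ai x = Re (airy_integral (of_real x) / (2 * pi * \<i>))"
  by (simp add: Ai_def airy_integral_def Airy_integrand_eq)

lemma cis_pi_third_cube: "cis (pi/3) ^ 3 = -1"
  unfolding Complex.DeMoivre by simp

lemma cis_minus_pi_third_cube: "cis (-(pi/3)) ^ 3 = -1"
  unfolding Complex.DeMoivre by (simp add: complex_eq_iff)

lemma cis_pi_third_eq: "cis (pi/3) = Complex (1/2) (sqrt 3/2)"
  by (simp add: complex_eq_iff cos_60 sin_60)

lemma cis_minus_pi_third_eq: "cis (-(pi/3)) = Complex (1/2) (-(sqrt 3/2))"
  by (simp add: complex_eq_iff cos_60 sin_60)

subsection \<open>The Airy integral is entire\<close>

lemma linear_minus_cube_le:
  fixes r c :: real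
  assumes "r \<ge> 0" "c \<ge> 1"
  shows "r * c - r^3/3 \<le> 2 * c^2"
proof (cases "r \<le> 2*c")
  case True
  then have "r*c \<le> 2*c*c" using assms by (intro mult_right_mono) auto
  moreover have "r^3 \<ge> 0" using assms by simp
  ultimately show ?thesis unfolding power2_eq_square by linarith
next
  case False
  then have "r*r \<ge> (2*c)*(2*c)" using assms by (intro mult_mono) auto
  moreover have "(2*c)*(2*c) \<ge> 3*c" using assms by (simp add: algebra_simps)
  ultimately have "r*r \<ge> 3*c" by linarith
  then have "r*(r*r) \<ge> r*(3*c)" using assms by (intro mult_left_mono) auto
  moreover have "c*c \<ge> 0" by simp
  ultimately show ?thesis unfolding power3_eq_cube power2_eq_square by linarith
qed

lemma norm_airy_ray_le:
  assumes "r \<ge> 0" "u^3 = -1" "norm u = 1"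
  shows "norm (airy_ray s u r) \<le> exp (2 * (norm s + 1)^2) * exp (-r)"
proof -
  have "(of_real r * u)^3 = - of_real (r^3)" using assms by (simp add: power_mult_distrib)
  then have Re_phase: "Re (airy_phase s (of_real r * u)) = - (r^3)/3 - r * Re (u * s)"
    by (simp add: airy_phase_def algebra_simps)
  have "- Re (u * s) \<le> norm s"
    using abs_Re_le_cmod[of "u * s"] assms by (simp add: norm_mult)
  then have "r * (- Re (u * s)) \<le> r * norm s" using assms(1) by (rule mult_left_mono)
  then have "Re (airy_phase s (of_real r * u)) \<le> 2 * (norm s + 1)^2 - r"
    using Re_phase linear_minus_cube_le[of r "norm s + 1"] assms(1) by (simp add: algebra_simps)
  then show ?thesis
    using assms by (simp add: airy_ray_def norm_mult flip: exp_add)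
qed

lemma norm_airy_ray_integrand_le:
  assumes "r \<ge> 0"
  shows "norm (airy_ray_integrand s r) \<le> 2 * exp (2 * (norm s + 1)^2) * exp (-r)"
  using norm_triangle_ineq4[of "airy_ray s (cis (pi/3)) r" "airy_ray s (cis (-(pi/3))) r"]
    norm_airy_ray_le[OF assms cis_pi_third_cube, of s]
    norm_airy_ray_le[OF assms cis_minus_pi_third_cube, of s]
  by (simp add: airy_ray_integrand_def)

lemma continuous_on_airy_ray_integrand: "continuous_on S (airy_ray_integrand s)"
  unfolding airy_ray_integrand_def airy_ray_def airy_phase_def by (intro continuous_intros) auto

lemma airy_ray_integrand_measurable: "airy_ray_integrand s \<in> borel_measurable (lebesgue_on {c..})"
  by (rule continuous_imp_measurable_on_sets_lebesgue[OF continuous_on_airy_ray_integrand]) auto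

lemma exp_minus_has_integral: "((\<lambda>x::real. K * exp (-x)) has_integral K * exp (-c)) {c..}"
  using has_integral_mult_right[OF has_integral_exp_minus_to_infinity[of 1 c]] by simp

lemma airy_ray_integrand_integrable:
  assumes "c \<ge> 0"
  shows "airy_ray_integrand s integrable_on {c..}"
  by (rule measurable_bounded_by_integrable_imp_integrable[OF airy_ray_integrand_measurable _
        norm_airy_ray_integrand_le])
     (use has_integral_integrable[OF exp_minus_has_integral[of 1]] assms in auto)

lemma norm_airy_integral_tail_le:
  assumes "c \<ge> 0"
  shows "norm (integral {c..} (airy_ray_integrand s)) \<le> 2 * exp (2 * (norm s + 1)^2) * exp (-c)"
  by (rule integral_norm_bound_integral'[OF norm_airy_ray_integrand_le airy_ray_integrand_measurable
        _ exp_minus_has_integral])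
     (use assms in auto)

lemma airy_integral_split:
  assumes "c \<ge> 0"
  shows "airy_integral s = integral {0..c} (airy_ray_integrand s) + integral {c..} (airy_ray_integrand s)"
proof -
  have "(airy_ray_integrand s has_integral
          integral {0..c} (airy_ray_integrand s) + integral {c..} (airy_ray_integrand s)) ({0..c} \<union> {c..})"
    by (rule has_integral_Un)
       (auto intro!: integrable_continuous_interval
          continuous_on_airy_ray_integrand airy_ray_integrand_integrable assms
          simp: negligible_sing max_def)
  moreover have "{0..c} \<union> {c..} = {0::real..}" using assms by auto
  ultimately show ?thesis unfolding airy_integral_def by (metis integral_unique)
qed

lemma holomorphic_truncated_airy_integral:
  "(\<lambda>s. integral {0..c} (airy_ray_integrand s)) holomorphic_on UNIV"
proof -
  define D where "D s r = airy_ray s (cis (pi/3)) r * - (of_real r * cis (pi/3))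
    - airy_ray s (cis (-(pi/3))) r * - (of_real r * cis (-(pi/3)))" for s r
  have "(\<lambda>s. integral (cbox 0 c) (airy_ray_integrand s)) holomorphic_on UNIV"
  proof (rule leibniz_rule_holomorphic)
    show "((\<lambda>s. airy_ray_integrand s r) has_field_derivative D s r) (at s within UNIV)" for s r
      unfolding airy_ray_integrand_def airy_ray_def airy_phase_def D_def
      by (auto intro!: derivative_eq_intros)
    show "continuous_on (UNIV \<times> cbox 0 c) (\<lambda>(s, r). D s r)"
      unfolding D_def airy_ray_def airy_phase_def case_prod_unfold
      by (intro continuous_intros) auto
  qed (auto intro: integrable_continuous_interval continuous_on_airy_ray_integrand)
  then show ?thesis by simp
qed

lemma truncated_airy_integral_uniform_limit:
  "uniform_limit (cball z d) (\<lambda>n s. integral {0..real n} (airy_ray_integrand s)) airy_integral sequentially"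
proof (rule uniform_limitI)
  fix e :: real assume "e > 0"
  define K where "K = 2 * exp (2 * (norm z + d + 1)^2)"
  have "(\<lambda>n. K * exp (- real n)) \<longlonglongrightarrow> 0" by real_asymp
  then have "\<forall>\<^sub>F n in sequentially. K * exp (- real n) < e"
    using \<open>e > 0\<close> by (simp add: order_tendsto_iff)
  then show "\<forall>\<^sub>F n in sequentially. \<forall>s\<in>cball z d.
               dist (integral {0..real n} (airy_ray_integrand s)) (airy_integral s) < e"
  proof eventually_elim
    case (elim n)
    show ?case
    proof
      fix s assume "s \<in> cball z d"
      then have "norm s \<le> norm z + d"
        using norm_triangle_sub[of s z] by (auto simp: dist_norm norm_minus_commute)
      then have "exp (2 * (norm s + 1)^2) \<le> exp (2 * (norm z + d + 1)^2)"
        by (simp add: power_mono)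
      have "dist (integral {0..real n} (airy_ray_integrand s)) (airy_integral s)
            = norm (integral {real n..} (airy_ray_integrand s))"
        using airy_integral_split[of "real n" s] by (simp add: dist_norm norm_minus_commute)
      also have "\<dots> \<le> 2 * exp (2 * (norm s + 1)^2) * exp (- real n)"
        by (rule norm_airy_integral_tail_le) simp
      also have "\<dots> \<le> K * exp (- real n)"
        unfolding K_def using \<open>exp (2 * (norm s + 1)^2) \<le> _\<close> by simp
      finally show "dist (integral {0..real n} (airy_ray_integrand s)) (airy_integral s) < e"
        using elim by simp
    qed
  qed
qed

lemma holomorphic_airy_integral: "airy_integral holomorphic_on UNIV"
proof -
  have ball: "airy_integral holomorphic_on ball z 1" for z
    by (rule holomorphic_uniform_limit[OF _ truncated_airy_integral_uniform_limit])
       (auto intro!: always_eventually holomorphic_on_subset[OF holomorphic_truncated_airy_integral]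
          holomorphic_on_imp_continuous_on)
  have "airy_integral field_differentiable (at z)" for z
    using ball[of z] by (rule holomorphic_on_imp_differentiable_at) auto
  then show ?thesis
    by (simp add: holomorphic_on_def field_differentiable_at_within)
qed

subsection \<open>Growth of the Airy integral\<close>

definition airy_line_exponent :: "real \<Rightarrow> complex \<Rightarrow> real" where
  "airy_line_exponent \<sigma> s = \<sigma>^3/3 - \<sigma> * Re s + (Im s)^2 / (2*\<sigma>)"

lemma Re_airy_phase: "Re (airy_phase s (Complex p q)) = p^3/3 - p*q^2 - p * Re s + q * Im s"
  by (simp add: airy_phase_def power3_eq_cube power2_eq_square field_simps)

lemma Re_airy_phase_vertical_le:
  assumes "\<sigma> \<ge> 1"
  shows "Re (airy_phase s (Complex \<sigma> u)) \<le> airy_line_exponent \<sigma> s - u^2/2"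
proof -
  have "(\<sigma> * u - Im s)^2 / (2*\<sigma>) = \<sigma> * u^2 / 2 - u * Im s + (Im s)^2/(2*\<sigma>)"
    using assms by (simp add: field_simps power2_eq_square)
  moreover have "(\<sigma> * u - Im s)^2 / (2*\<sigma>) \<ge> 0" "(\<sigma> - 1) * u^2 \<ge> 0" using assms by simp_all
  ultimately show ?thesis
    unfolding Re_airy_phase airy_line_exponent_def by (simp add: algebra_simps)
qed

lemma Re_airy_phase_horizontal_le:
  assumes "\<sigma> \<le> p" "p \<le> c/2" "h^2 = 3*c^2/4" "\<bar>h\<bar> \<le> c" "0 \<le> \<sigma>"
  shows "Re (airy_phase s (Complex p h)) \<le> -(2/3)*\<sigma>*c^2 + 2 * norm s * c"
proof -
  have p0: "p \<ge> 0" using assms by linarith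
  have "p^2 \<le> (c/2)^2" using assms p0 by (intro power_mono) auto
  then have "p * p^2 \<le> p * (c/2)^2" using p0 by (intro mult_left_mono) auto
  then have cube: "p^3 \<le> p * c^2/4" by (simp add: power3_eq_cube power2_eq_square algebra_simps)
  have "p * (- Re s) \<le> p * norm s"
    using abs_Re_le_cmod[of s] p0 by (intro mult_left_mono) auto
  moreover have "h * Im s \<le> c * norm s"
  proof -
    have "h * Im s \<le> \<bar>h\<bar> * \<bar>Im s\<bar>" by (simp flip: abs_mult)
    also have "\<dots> \<le> c * norm s" using assms abs_Im_le_cmod[of s] by (intro mult_mono) auto
    finally show ?thesis .
  qed
  moreover have "p * norm s \<le> c * norm s" using assms p0 by (intro mult_right_mono) auto
  moreover have "\<sigma> * c^2 \<le> p * c^2" using assms by (intro mult_right_mono) auto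
  moreover have "p*h^2 = 3*(p*c^2)/4" using assms(3) by simp
  ultimately have "p^3/3 - p*h^2 - p * Re s + h * Im s \<le> -(2/3)*(\<sigma>*c^2) + 2*(c * norm s)"
    using cube by linarith
  then show ?thesis unfolding Re_airy_phase by (simp only: mult.assoc mult.commute[of c "norm s"])
qed

lemma exp_minus_half_square_le: "exp (-(u^2/2)) \<le> 2 / (1 + (u::real)^2)"
proof -
  have "(1 + u^2)/2 \<le> exp (u^2/2)"
    using exp_ge_add_one_self[of "u^2/2"] add_divide_distrib[of 1 "u^2" 2] by linarith
  then have "inverse (exp (u^2/2)) \<le> inverse ((1 + u^2)/2)"
    by (intro le_imp_inverse_le) (auto intro: add_pos_nonneg)
  then show ?thesis by (simp add: exp_minus)
qed

lemma line_has_vector_derivative: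
  assumes "\<And>z. (G has_field_derivative g z) (at z)"
  shows "((\<lambda>r. G (a + of_real r * u)) has_vector_derivative u * g (a + of_real r * u)) (at r within A)"
proof -
  have "((\<lambda>r::real. a + of_real r * u) has_vector_derivative u) (at r)"
    by (rule has_vector_derivative_real_field) (auto intro!: derivative_eq_intros)
  from field_vector_diff_chain_at[OF this assms] show ?thesis
    by (auto simp: o_def intro: has_vector_derivative_at_within)
qed

text \<open>The contour deformation is carried out with a primitive G of the integrand, which exists
  because the integrand is entire.\<close>

context
  fixes s :: complex and G :: "complex \<Rightarrow> complex"
  assumes G_deriv: "\<And>\<zeta>. (G has_field_derivative exp (airy_phase s \<zeta>)) (at \<zeta>)"
begin

lemma truncated_airy_integral_eq_primitive:
  assumes "c \<ge> 0"
  shows "integral {0..c} (airy_ray_integrand s) = G (of_real c * cis (pi/3)) - G (of_real c * cis (-(pi/3)))"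
proof -
  have ray: "((\<lambda>r. G (of_real r * u)) has_vector_derivative u * exp (airy_phase s (of_real r * u)))
               (at r within A)" for u r A
    using line_has_vector_derivative[OF G_deriv, of 0] by simp
  have "(airy_ray_integrand s has_integral
         (G (of_real c * cis (pi/3)) - G (of_real c * cis (-(pi/3))))
       - (G (of_real 0 * cis (pi/3)) - G (of_real 0 * cis (-(pi/3))))) {0..c}"
    unfolding airy_ray_integrand_def airy_ray_def
    by (rule fundamental_theorem_of_calculus)
       (use assms in \<open>auto intro!: derivative_eq_intros ray\<close>)
  then show ?thesis by (simp add: integral_unique)
qed

lemma norm_primitive_vertical_diff_le:
  assumes "\<sigma> \<ge> 1" "h \<ge> 0"
  shows "norm (G (Complex \<sigma> h) - G (Complex \<sigma> (-h))) \<le> 2 * pi * exp (airy_line_exponent \<sigma> s)"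
proof -
  define M where "M = airy_line_exponent \<sigma> s"
  have line: "of_real \<sigma> + of_real u * \<i> = Complex \<sigma> u" for u by (simp add: complex_eq_iff)
  have vertical: "((\<lambda>u. G (Complex \<sigma> u)) has_vector_derivative \<i> * exp (airy_phase s (Complex \<sigma> u)))
                    (at u within A)" for u A
    using line_has_vector_derivative[OF G_deriv, of "of_real \<sigma>" \<i>] unfolding line .
  have I1: "((\<lambda>u. \<i> * exp (airy_phase s (Complex \<sigma> u))) has_integral
        G (Complex \<sigma> h) - G (Complex \<sigma> (-h))) {-h..h}"
    by (rule fundamental_theorem_of_calculus) (use assms vertical in auto)
  have I2: "((\<lambda>u. 2 * exp M * inverse (1 + u^2)) has_integral
        2 * exp M * arctan h - 2 * exp M * arctan (-h)) {-h..h}"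
    by (rule fundamental_theorem_of_calculus)
       (use assms in \<open>auto intro!: derivative_eq_intros
          simp: has_real_derivative_iff_has_vector_derivative[symmetric]\<close>)
  have bound: "norm (\<i> * exp (airy_phase s (Complex \<sigma> u))) \<le> 2 * exp M * inverse (1 + u^2)" for u
  proof -
    have "norm (\<i> * exp (airy_phase s (Complex \<sigma> u))) \<le> exp M * exp (-(u^2/2))"
      using Re_airy_phase_vertical_le[OF assms(1), of s u]
      by (simp add: M_def norm_mult flip: exp_add)
    also have "\<dots> \<le> exp M * (2 / (1 + u^2))"
      using exp_minus_half_square_le by (rule mult_left_mono) simp
    finally show ?thesis by (simp add: field_simps)
  qed
  have "norm (G (Complex \<sigma> h) - G (Complex \<sigma> (-h))) \<le> 2 * exp M * arctan h - 2 * exp M * arctan (-h)"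
    using integral_norm_bound_integral[OF has_integral_integrable[OF I1] has_integral_integrable[OF I2] bound]
    unfolding integral_unique[OF I1] integral_unique[OF I2] .
  also have "\<dots> = 2 * exp M * (2 * arctan h)" by (simp add: algebra_simps arctan_minus)
  also have "\<dots> \<le> 2 * exp M * pi" using arctan_ubound[of h] by (intro mult_left_mono) auto
  finally show ?thesis by (simp add: M_def mult_ac)
qed

lemma norm_primitive_horizontal_diff_le:
  assumes "\<sigma> \<ge> 1" "2*\<sigma> \<le> c" "h^2 = 3*c^2/4" "\<bar>h\<bar> \<le> c"
  shows "norm (G (Complex (c/2) h) - G (Complex \<sigma> h)) \<le> c * exp (-(2/3)*\<sigma>*c^2 + 2 * norm s * c)"
proof -
  let ?S = "closed_segment (Complex (c/2) h) (Complex \<sigma> h)"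
  have "norm (G (Complex (c/2) h) - G (Complex \<sigma> h))
        \<le> exp (-(2/3)*\<sigma>*c^2 + 2 * norm s * c) * norm (Complex (c/2) h - Complex \<sigma> h)"
  proof (rule field_differentiable_bound[of ?S])
    show "(G has_field_derivative exp (airy_phase s \<zeta>)) (at \<zeta> within ?S)" for \<zeta>
      using G_deriv by (rule has_field_derivative_at_within)
    show "norm (exp (airy_phase s \<zeta>)) \<le> exp (-(2/3)*\<sigma>*c^2 + 2 * norm s * c)" if "\<zeta> \<in> ?S" for \<zeta>
    proof -
      have Re_\<zeta>: "\<sigma> \<le> Re \<zeta>" "Re \<zeta> \<le> c/2" and Im_\<zeta>: "Im \<zeta> = h"
        using that assms by (auto simp: closed_segment_same_Im closed_segment_eq_real_ivl split: if_splits)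
      from Re_airy_phase_horizontal_le[OF Re_\<zeta> assms(3,4)] assms(1)
      have "Re (airy_phase s (Complex (Re \<zeta>) h)) \<le> -(2/3)*\<sigma>*c^2 + 2 * norm s * c" by simp
      moreover have "\<zeta> = Complex (Re \<zeta>) h" using Im_\<zeta> by (simp add: complex_eq_iff)
      ultimately show ?thesis by (metis exp_le_cancel_iff norm_exp_eq_Re)
    qed
  qed auto
  also have "norm (Complex (c/2) h - Complex \<sigma> h) \<le> c"
  proof -
    have "Complex (c/2) h - Complex \<sigma> h = of_real (c/2 - \<sigma>)" by (simp add: complex_eq_iff)
    moreover have "norm (of_real (c/2 - \<sigma>) :: complex) \<le> c" using assms by (simp only: norm_of_real)
    ultimately show ?thesis by metis
  qed
  finally show ?thesis by (simp add: mult_left_mono mult.commute)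
qed

lemma norm_airy_integral_le_contour:
  assumes "\<sigma> \<ge> 1" "2*\<sigma> \<le> c"
  shows "norm (airy_integral s) \<le> 2 * pi * exp (airy_line_exponent \<sigma> s)
           + 2 * (c * exp (-(2/3)*\<sigma>*c^2 + 2 * norm s * c)) + 2 * exp (2 * (norm s + 1)^2) * exp (-c)"
proof -
  \<comment> \<open>The truncated rays end at c/2 \<plusminus> ih; join these horizontally to \<sigma> \<plusminus> ih, and those two
    points by a vertical segment.\<close>
  define h where "h = c * (sqrt 3/2)"
  have c0: "c \<ge> 0" using assms by simp
  have h0: "h \<ge> 0" using c0 by (simp add: h_def)
  have h2: "h^2 = 3*c^2/4" "(-h)^2 = 3*c^2/4" by (simp_all add: h_def power_mult_distrib power_divide)
  have "sqrt 3 \<le> 2" by (rule real_le_lsqrt) auto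
  then have hc: "\<bar>h\<bar> \<le> c" "\<bar>-h\<bar> \<le> c" using c0 h0 by (auto simp: h_def intro: mult_left_mono)
  have "of_real c * cis (pi/3) = Complex (c/2) h" "of_real c * cis (-(pi/3)) = Complex (c/2) (-h)"
    by (simp_all add: cis_pi_third_eq cis_minus_pi_third_eq h_def complex_eq_iff)
  then have "airy_integral s = (G (Complex (c/2) h) - G (Complex \<sigma> h))
        + (G (Complex \<sigma> h) - G (Complex \<sigma> (-h))) - (G (Complex (c/2) (-h)) - G (Complex \<sigma> (-h)))
        + integral {c..} (airy_ray_integrand s)"
    using airy_integral_split[OF c0, of s] truncated_airy_integral_eq_primitive[OF c0] by simp
  also have "norm \<dots> \<le> norm (G (Complex (c/2) h) - G (Complex \<sigma> h))
        + norm (G (Complex \<sigma> h) - G (Complex \<sigma> (-h))) + norm (G (Complex (c/2) (-h)) - G (Complex \<sigma> (-h)))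
        + norm (integral {c..} (airy_ray_integrand s))"
    by (intro order.trans[OF norm_triangle_ineq] add_mono order.trans[OF norm_triangle_ineq4] order_refl)
  also have "\<dots> \<le> 2 * pi * exp (airy_line_exponent \<sigma> s)
        + 2 * (c * exp (-(2/3)*\<sigma>*c^2 + 2 * norm s * c)) + 2 * exp (2 * (norm s + 1)^2) * exp (-c)"
    using norm_primitive_horizontal_diff_le[OF assms h2(1) hc(1)]
      norm_primitive_horizontal_diff_le[OF assms h2(2) hc(2)]
      norm_primitive_vertical_diff_le[OF assms(1) h0] norm_airy_integral_tail_le[OF c0, of s]
    by linarith
  finally show ?thesis .
qed

end

lemma norm_airy_integral_le:
  assumes "\<sigma> \<ge> 1"
  shows "norm (airy_integral s) \<le> 2 * pi * exp (airy_line_exponent \<sigma> s)"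
proof -
  have "(\<lambda>\<zeta>. exp (airy_phase s \<zeta>)) holomorphic_on UNIV"
    unfolding airy_phase_def by (intro holomorphic_intros) auto
  then obtain G where "\<And>\<zeta>. (G has_field_derivative exp (airy_phase s \<zeta>)) (at \<zeta>)"
    using holomorphic_convex_primitive'[of UNIV] by auto
  note contour = norm_airy_integral_le_contour[OF this assms]
  define bound where "bound c = 2 * pi * exp (airy_line_exponent \<sigma> s)
    + 2 * (c * exp (-(2/3)*\<sigma>*c^2 + 2 * norm s * c)) + 2 * exp (2 * (norm s + 1)^2) * exp (-c)" for c
  have "(bound \<longlongrightarrow> 2 * pi * exp (airy_line_exponent \<sigma> s) + 2 * 0 + 2 * exp (2 * (norm s + 1)^2) * 0) at_top"
    unfolding bound_def using assms by (intro tendsto_intros) real_asymp+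
  moreover have "\<forall>\<^sub>F c in at_top. norm (airy_integral s) \<le> bound c"
    using eventually_ge_at_top[of "2*\<sigma>"] by eventually_elim (use contour bound_def in simp)
  ultimately show ?thesis
    using tendsto_le[OF trivial_limit_at_top_linorder _ tendsto_const] by fastforce
qed

subsection \<open>Bounds on the kernel\<close>

lemma quadratic_le_cube_plus_const:
  fixes R b e :: real
  assumes "0 \<le> R" "0 < e" "0 \<le> b"
  shows "b * (R^2 + R + 1) \<le> e * R^3 + (2*b + 8*b^3/e^2)"
proof -
  have "0 \<le> R^2 - 2*R + 1" using zero_le_power2[of "R - 1"] by (simp add: power2_diff)
  then have "R \<le> R^2 + 1" using assms by linarith
  then have "b * R \<le> b * (R^2 + 1)" using assms by (intro mult_left_mono) auto
  then have square: "b * (R^2 + R + 1) \<le> 2*b*R^2 + 2*b" by (simp add: algebra_simps)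
  have "2*b*R^2 \<le> e*R^3 + 8*b^3/e^2"
  proof (cases "R \<le> 2*b/e")
    case True
    then have "R^2 \<le> (2*b/e)^2" using assms by (intro power_mono) auto
    then have "2*b*R^2 \<le> 2*b*(2*b/e)^2" using assms by (intro mult_left_mono) auto
    also have "\<dots> = 8*b^3/e^2" by (simp add: power2_eq_square power3_eq_cube field_simps)
    finally have "2*b*R^2 \<le> 8*b^3/e^2" .
    moreover have "0 \<le> e*R^3" using assms by simp
    ultimately show ?thesis by linarith
  next
    case False
    then have "2*b \<le> e*R" using assms by (simp add: field_simps)
    then have "2*b*R^2 \<le> e*R*R^2" using assms by (intro mult_right_mono) auto
    moreover have "e*R*R^2 = e*R^3" by (simp add: power2_eq_square power3_eq_cube)
    moreover have "0 \<le> 8*b^3/e^2" using assms by simp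
    ultimately show ?thesis by linarith
  qed
  with square show ?thesis by simp
qed

lemma airy_line_exponent_le:
  assumes "0 \<le> R" "1 \<le> A" "R^2 - 2*R - A \<le> Re s" "(Im s)^2 \<le> 4*(R+1)^2"
  shows "airy_line_exponent (R+1) s \<le> -(2/3)*R^3 + (8 + A)*(R^2 + R + 1)"
proof -
  have "(R+1) * (R^2 - 2*R - A) \<le> (R+1) * Re s" using assms by (intro mult_left_mono) auto
  moreover have "(Im s)^2/(2*(R+1)) \<le> 4*(R+1)^2/(2*(R+1))" using assms by (intro divide_right_mono) auto
  moreover have "4*(R+1)^2/(2*(R+1)) = 2*(R+1)" using assms by (simp add: power2_eq_square field_simps)
  moreover have "-(2/3)*R^3 + (8 + A)*(R^2 + R + 1) - ((R+1)^3/3 - (R+1)*(R^2 - 2*R - A) + 2*(R+1))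
                   = (6 + A)*R^2 + 3*R + 17/3"
    by (simp add: power2_eq_square power3_eq_cube field_simps)
  moreover have "(6 + A)*R^2 + 3*R + 17/3 \<ge> 0" using assms by simp
  ultimately show ?thesis unfolding airy_line_exponent_def by linarith
qed

lemma circle_around_real_bounds:
  fixes t :: complex
  assumes "norm (of_real x - t) = 1" "\<bar>x\<bar> \<le> R"
  shows "\<bar>Re t\<bar> \<le> R + 1" "x^2 - 2*R - 1 \<le> Re (t^2)" "(Im (t^2))^2 \<le> 4*(R+1)^2"
proof -
  define p q where "p = Re t" and "q = Im t"
  have "(x - p)^2 + q^2 = 1"
    using arg_cong[OF assms(1), of "\<lambda>r. r^2"] by (simp add: cmod_power2 p_def q_def)
  then have q: "q^2 \<le> 1" and "(x - p)^2 \<le> 1"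
    using zero_le_power2[of q] zero_le_power2[of "x - p"] by linarith+
  then have xp: "\<bar>x - p\<bar> \<le> 1" using abs_le_square_iff[of "x - p" 1] by simp
  then show p: "\<bar>Re t\<bar> \<le> R + 1" using assms(2) by (simp add: p_def)
  have "\<bar>x * (p - x)\<bar> \<le> \<bar>x\<bar>" using xp by (simp add: abs_mult mult_left_le)
  moreover have "p^2 = x^2 + 2*(x*(p - x)) + (p - x)^2" by (simp add: power2_eq_square algebra_simps)
  moreover have "Re (t^2) = p^2 - q^2" by (simp add: p_def q_def power2_eq_square)
  ultimately show "x^2 - 2*R - 1 \<le> Re (t^2)" using q assms(2) zero_le_power2[of "p - x"] by linarith
  have "(Im (t^2))^2 = 4*p^2*q^2" by (simp add: p_def q_def power2_eq_square)
  also have "\<dots> \<le> 4*p^2" using q by (simp add: mult_left_le)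
  also have "\<dots> \<le> 4*(R+1)^2" using p abs_le_square_iff[of p "R+1"] by (simp add: p_def)
  finally show "(Im (t^2))^2 \<le> 4*(R+1)^2" .
qed

lemma mult_le_quadratic_bound:
  fixes p y z R :: real
  assumes "\<bar>p\<bar> \<le> R + 1" "\<bar>z\<bar> \<le> R" "0 \<le> R"
  shows "p * y * z \<le> \<bar>y\<bar> * (R^2 + R + 1)"
proof -
  have "p * y * z \<le> \<bar>p\<bar> * (\<bar>y\<bar> * \<bar>z\<bar>)" by (simp flip: abs_mult)
  also have "\<dots> \<le> (R + 1) * (\<bar>y\<bar> * R)" using assms by (intro mult_mono mult_left_mono) auto
  also have "\<dots> \<le> \<bar>y\<bar> * (R^2 + R + 1)" by (simp add: power2_eq_square algebra_simps)
  finally show ?thesis .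
qed

definition airy_kernel_extension :: "real \<Rightarrow> real \<Rightarrow> real \<Rightarrow> complex \<Rightarrow> complex" where
  "airy_kernel_extension a y z t =
     2 * exp (2 * t * of_real y * of_real z) * airy_integral (t^2 + of_real (y^2 + z^2 + a/4)) / (2 * pi * \<i>)"

lemma holomorphic_airy_kernel_extension: "airy_kernel_extension a y z holomorphic_on UNIV"
proof -
  have "(\<lambda>t. t^2 + of_real (y^2 + z^2 + a/4)) holomorphic_on UNIV"
    by (intro holomorphic_intros)
  from holomorphic_on_compose[OF this holomorphic_on_subset[OF holomorphic_airy_integral]]
  have "(\<lambda>t. airy_integral (t^2 + of_real (y^2 + z^2 + a/4))) holomorphic_on UNIV"
    by (simp add: o_def)
  then show ?thesis unfolding airy_kernel_extension_def by (intro holomorphic_intros) auto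
qed

lemma Kker_eq_Re_airy_kernel_extension: "Kker a x y z = Re (airy_kernel_extension a y z (of_real x))"
proof -
  have "airy_kernel_extension a y z (of_real x)
        = of_real (2 * exp (2*x*y*z)) * (airy_integral (of_real (x^2 + y^2 + z^2 + a/4)) / (2 * pi * \<i>))"
    unfolding airy_kernel_extension_def by (simp add: exp_of_real[symmetric] add.assoc)
  moreover have "Re (of_real r * w) = r * Re w" for r w by simp
  ultimately show ?thesis
    unfolding Kker_def Ai_eq_airy_integral by (simp only:)
qed

lemma higher_deriv_Re_of_real:
  assumes "H holomorphic_on UNIV"
  shows "(deriv ^^ n) (\<lambda>x. Re (H (of_real x))) = (\<lambda>x. Re ((deriv ^^ n) H (of_real x)))"
proof (induction n)
  case (Suc n)
  have "(deriv ^^ n) H holomorphic_on UNIV" by (rule holomorphic_higher_deriv[OF assms]) auto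
  then have "((\<lambda>x. Re ((deriv ^^ n) H (of_real x))) has_real_derivative
              Re (deriv ((deriv ^^ n) H) (of_real x))) (at x)" for x
    by (intro has_field_derivative_Re has_vector_derivative_real_field holomorphic_derivI) auto
  then show ?case by (simp add: Suc.IH fun_eq_iff DERIV_imp_deriv)
qed simp

lemma norm_airy_kernel_extension_le:
  fixes x z :: real
  assumes "norm (of_real x - t) = 1"
  defines "R \<equiv> sqrt (x^2 + z^2)"
  shows "norm (airy_kernel_extension a y z t)
           \<le> 2 * exp (-(2/3)*R^3 + (2*\<bar>y\<bar> + 8 + (1 + \<bar>a\<bar>/4))*(R^2 + R + 1))"
proof -
  define s where "s = t^2 + of_real (y^2 + z^2 + a/4)"
  have R0: "R \<ge> 0" and R2: "R^2 = x^2 + z^2" unfolding R_def by simp_all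
  have xR: "\<bar>x\<bar> \<le> R" and zR: "\<bar>z\<bar> \<le> R"
    unfolding R_def using real_sqrt_le_mono[of "x^2" "x^2 + z^2"] real_sqrt_le_mono[of "z^2" "x^2 + z^2"]
    by simp_all
  note circle = circle_around_real_bounds[OF assms(1) xR]
  have "Re s = Re (t^2) + y^2 + z^2 + a/4" by (simp add: s_def)
  then have "R^2 - 2*R - (1 + \<bar>a\<bar>/4) \<le> Re s"
    using circle(2) R2 zero_le_power2[of y] abs_ge_minus_self[of a] by linarith
  moreover have "(Im s)^2 \<le> 4*(R+1)^2" using circle(3) by (simp add: s_def)
  ultimately have line: "airy_line_exponent (R+1) s \<le> -(2/3)*R^3 + (8 + (1 + \<bar>a\<bar>/4))*(R^2 + R + 1)"
    using R0 by (intro airy_line_exponent_le) auto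
  have exponential: "Re (2 * t * of_real y * of_real z) \<le> 2*\<bar>y\<bar>*(R^2 + R + 1)"
    using mult_le_quadratic_bound[OF circle(1) zR R0, of y] by simp
  have "norm (airy_integral s) \<le> 2 * pi * exp (airy_line_exponent (R+1) s)"
    using R0 by (intro norm_airy_integral_le) simp
  moreover have "norm (airy_kernel_extension a y z t)
                   = 2 * exp (Re (2 * t * of_real y * of_real z)) * norm (airy_integral s) / (2 * pi)"
    unfolding airy_kernel_extension_def s_def by (simp add: norm_mult norm_divide)
  ultimately have "norm (airy_kernel_extension a y z t)
        \<le> 2 * exp (2*\<bar>y\<bar>*(R^2 + R + 1)) * (2 * pi * exp (airy_line_exponent (R+1) s)) / (2 * pi)"
    using exponential by (simp only:) (intro divide_right_mono mult_mono; simp)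
  also have "\<dots> = 2 * exp (2*\<bar>y\<bar>*(R^2 + R + 1) + airy_line_exponent (R+1) s)"
    by (simp add: exp_add)
  also have "\<dots> \<le> 2 * exp (-(2/3)*R^3 + (2*\<bar>y\<bar> + 8 + (1 + \<bar>a\<bar>/4))*(R^2 + R + 1))"
    using line by (simp add: algebra_simps)
  finally show ?thesis .
qed

lemma sqrt_power3_eq_powr:
  fixes X :: real
  assumes "X \<ge> 0"
  shows "sqrt X ^ 3 = X powr (3/2)"
proof -
  have "sqrt X ^ 3 = (X powr (1/2)) powr (real 3)"
    using assms by (cases "X = 0") (simp_all add: powr_half_sqrt powr_realpow)
  then show ?thesis using assms by (simp add: powr_powr)
qed

lemma norm_airy_kernel_extension_circle_le:
  assumes "\<rho> < 1"
  obtains K where "K > 0" "\<And>x z t. norm (of_real x - t) = 1 \<Longrightarrow>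
    norm (airy_kernel_extension a y z t) \<le> K * exp (-(2*\<rho>/3) * (x^2 + z^2) powr (3/2))"
proof
  define b where "b = 2*\<bar>y\<bar> + 8 + (1 + \<bar>a\<bar>/4)"
  define e where "e = 2*(1 - \<rho>)/3"
  show "2 * exp (2*b + 8*b^3/e^2) > 0" by simp
  fix x z :: real and t :: complex
  assume circle: "norm (of_real x - t) = 1"
  define R where "R = sqrt (x^2 + z^2)"
  have "e > 0" "b \<ge> 0" "R \<ge> 0" using assms by (simp_all add: e_def b_def R_def)
  have "norm (airy_kernel_extension a y z t) \<le> 2 * exp (-(2/3)*R^3 + b*(R^2 + R + 1))"
    using norm_airy_kernel_extension_le[OF circle, of a y z] by (simp add: R_def b_def)
  also have "\<dots> \<le> 2 * exp (-(2/3)*R^3 + (e*R^3 + (2*b + 8*b^3/e^2)))"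
    using quadratic_le_cube_plus_const[OF \<open>R \<ge> 0\<close> \<open>e > 0\<close> \<open>b \<ge> 0\<close>] by simp
  also have "\<dots> = 2 * exp (2*b + 8*b^3/e^2) * exp (-(2*\<rho>/3) * R^3)"
    by (simp add: e_def field_simps flip: exp_add)
  finally show "norm (airy_kernel_extension a y z t)
                  \<le> 2 * exp (2*b + 8*b^3/e^2) * exp (-(2*\<rho>/3) * (x^2 + z^2) powr (3/2))"
    by (simp add: R_def sqrt_power3_eq_powr)
qed

theorem lemma2:
  fixes a y \<rho> :: real and n :: nat
  assumes "0 < \<rho>" and "\<rho> < 1"
  shows "\<exists>C>0. \<forall>x z :: real.
           \<bar>(deriv ^^ n) (\<lambda>t. Kker a t y z) x\<bar>
             < C * exp (- (2 * \<rho> / 3) * (x^2 + z^2) powr (3/2))"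
proof -
  obtain K where K: "K > 0" and circle_bound: "\<And>x z t. norm (of_real x - t) = 1 \<Longrightarrow>
      norm (airy_kernel_extension a y z t) \<le> K * exp (-(2*\<rho>/3) * (x^2 + z^2) powr (3/2))"
    using norm_airy_kernel_extension_circle_le[OF assms(2)] by blast
  have "\<bar>(deriv ^^ n) (\<lambda>t. Kker a t y z) x\<bar> < (fact n * K + 1) * exp (- (2 * \<rho> / 3) * (x^2 + z^2) powr (3/2))"
    for x z
  proof -
    let ?E = "exp (- (2 * \<rho> / 3) * (x^2 + z^2) powr (3/2))"
    have "\<bar>(deriv ^^ n) (\<lambda>t. Kker a t y z) x\<bar> = \<bar>Re ((deriv ^^ n) (airy_kernel_extension a y z) (of_real x))\<bar>"
      by (simp add: Kker_eq_Re_airy_kernel_extension higher_deriv_Re_of_real[OF holomorphic_airy_kernel_extension])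
    also have "\<dots> \<le> norm ((deriv ^^ n) (airy_kernel_extension a y z) (of_real x))" by (rule abs_Re_le_cmod)
    also have "\<dots> \<le> fact n * (K * ?E) / 1^n"
      using holomorphic_on_subset[OF holomorphic_airy_kernel_extension]
      by (intro Cauchy_inequality holomorphic_on_imp_continuous_on circle_bound) auto
    also have "\<dots> < (fact n * K + 1) * ?E" by (simp add: distrib_right)
    finally show ?thesis .
  qed
  then show ?thesis using K by (intro exI[of _ "fact n * K + 1"]) (auto intro: add_pos_nonneg)
qed

end
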